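(* Assume the pairs $(Y_i(0),Y_i(1))$, $i\in[N]$, are independent and identically distributed, with $Y_i(a)\sim F_a$ for $a\in\{0,1\}$, where $F_a$ is supported on a finite set $\mathcal{Y}=\{y_1,\dots,y_K\}$, and assume the assignment vector $Z=(Z_1,\dots,Z_N)\in\{0,1\}^N$ is independent of the potential outcomes. Let $P_i=\mathbb{P}(Z_i=1)$, $P=\frac1N\sum_i P_i$, $\tilde P=\min(P,1-P)>0$, and $\epsilon>0$. Let $X^{true}$ be the indicator vector $X^{true,(a)}_{ik}=\mathbb{I}(Y_i(a)=y_k)$ of the true potential outcomes, let $Q$ be a symmetric matrix with $\mathbf{Var}_Z[\hat\tau]=(X^{true})^TQX^{true}$, and let $V^*$ be the maximum of $X^TQX$ over all binary $X=(X^{(a)}_{ik})$ satisfying constraints (a)--(d) in the context. Then $$\mathbb{P}\big(V^*\ge \mathbf{Var}_Z[\hat\tau]\big)\ \ge\ 1-\beta,\qquad \beta:=8\exp\Big(-\frac{\epsilon^2}{4}N\tilde P\Big)+\frac{32}{N^2\tilde P^2}\sum_{i,j\in[N]}\mathbf{Cov}(Z_i,Z_j).$$ More precisely, with probability at least $1-\beta$ the true indicator vector $X^{true}$ satisfies constraint (d), hence is feasible.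
   Context: Finite population of $N$ units with treatment indicators $Z_i\in\{0,1\}$, potential outcomes $Y_i(0),Y_i(1)$, observed outcomes $Y_i^{obs}=Y_i(Z_i)$, $N_1=\sum_i Z_i$, $N_0=N-N_1$. $\hat\tau$ is an estimator of the average treatment effect whose variance over the randomness of $Z$ (potential outcomes held fixed) is denoted $\mathbf{Var}_Z[\hat\tau]$. The constraints on binary variables $X^{(a)}_{ik}\in\{0,1\}$ ($a\in\{0,1\}$, $i\in[N]$, $k\in[K]$) are: (a) for all $i,k$: $X^{(Z_i)}_{ik}=1$ iff $Y_i^{obs}=y_k$; (b) for all $a,i,k$: $X^{(a)}_{ik}=0$ whenever $y_k\notin \mathrm{supp}(F_a)$; (c) for all $a,i$: $\sum_{k=1}^K X^{(a)}_{ik}=1$; (d) for all $a,k$: $\left|\sum_{i=1}^N X^{(a)}_{ik}\left(\frac{Z_i}{N_1}-\frac{1-Z_i}{N_0}\right)\right|\le \epsilon$. *)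

theory Defs
  imports "HOL-Probability.Probability"
begin

text \<open>Units are indexed by i < N, outcome values by k < K (0-based).
  Treatment arm a :: bool, True = treatment (1), False = control (0).\<close>

definition po :: "real \<times> real \<Rightarrow> bool \<Rightarrow> real" where
  "po p a = (if a then snd p else fst p)"

definition Yobs :: "(nat \<Rightarrow> bool) \<Rightarrow> (nat \<Rightarrow> real \<times> real) \<Rightarrow> nat \<Rightarrow> real" where
  "Yobs z ys i = po (ys i) (z i)"

definition covariance :: "'a pmf \<Rightarrow> ('a \<Rightarrow> real) \<Rightarrow> ('a \<Rightarrow> real) \<Rightarrow> real" where
  "covariance p X Y = measure_pmf.expectation p
     (\<lambda>w. (X w - measure_pmf.expectation p X) * (Y w - measure_pmf.expectation p Y))"

definition quad :: "nat \<Rightarrow> nat \<Rightarrow> (bool \<times> nat \<times> nat \<Rightarrow> bool \<times> nat \<times> nat \<Rightarrow> real)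
                    \<Rightarrow> (bool \<Rightarrow> nat \<Rightarrow> nat \<Rightarrow> bool) \<Rightarrow> real" where
  "quad N K Q X = (\<Sum>u\<in>UNIV \<times> {..<N} \<times> {..<K}. \<Sum>v\<in>UNIV \<times> {..<N} \<times> {..<K}.
      of_bool (X (fst u) (fst (snd u)) (snd (snd u))) * Q u v *
      of_bool (X (fst v) (fst (snd v)) (snd (snd v))))"

definition constr_d :: "nat \<Rightarrow> nat \<Rightarrow> real \<Rightarrow> (nat \<Rightarrow> bool) \<Rightarrow> (bool \<Rightarrow> nat \<Rightarrow> nat \<Rightarrow> bool) \<Rightarrow> bool" where
  "constr_d N K \<epsilon> z X \<longleftrightarrow>
     (let N1 = real (card {i\<in>{..<N}. z i}); N0 = real N - N1 in
      \<forall>a. \<forall>k<K. \<bar>\<Sum>i<N. of_bool (X a i k) * (of_bool (z i) / N1 - (1 - of_bool (z i)) / N0)\<bar> \<le> \<epsilon>)"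

text \<open>Feasible set: binary X (supported on indices i<N, k<K) satisfying (a)--(d).
  supp a is the support of F_a.\<close>
definition feasible :: "nat \<Rightarrow> nat \<Rightarrow> (nat \<Rightarrow> real) \<Rightarrow> (bool \<Rightarrow> real set) \<Rightarrow> real
      \<Rightarrow> (nat \<Rightarrow> bool) \<Rightarrow> (nat \<Rightarrow> real) \<Rightarrow> (bool \<Rightarrow> nat \<Rightarrow> nat \<Rightarrow> bool) set" where
  "feasible N K y supp \<epsilon> z yobs = {X.
     (\<forall>a i k. (N \<le> i \<or> K \<le> k) \<longrightarrow> \<not> X a i k) \<and>
     (\<forall>i<N. \<forall>k<K. X (z i) i k \<longleftrightarrow> yobs i = y k) \<and>
     (\<forall>a. \<forall>i<N. \<forall>k<K. y k \<notin> supp a \<longrightarrow> \<not> X a i k) \<and>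
     (\<forall>a. \<forall>i<N. card {k\<in>{..<K}. X a i k} = 1) \<and>
     constr_d N K \<epsilon> z X}"

definition Vstar where
  "Vstar N K Q y supp \<epsilon> z yobs = Max ((quad N K Q) ` feasible N K y supp \<epsilon> z yobs)"

definition Xtrue :: "nat \<Rightarrow> nat \<Rightarrow> (nat \<Rightarrow> real) \<Rightarrow> (nat \<Rightarrow> real \<times> real) \<Rightarrow> bool \<Rightarrow> nat \<Rightarrow> nat \<Rightarrow> bool" where
  "Xtrue N K y ys a i k \<longleftrightarrow> i < N \<and> k < K \<and> po (ys i) a = y k"

end

theory Submission
  imports Defs
begin

text \<open>The true indicator vector satisfies constraints (a)--(c) for every outcome vector in the
  support of \<open>F\<close>, so once it also satisfies the balance constraint (d) it is feasible and
  \<open>V\<^sup>* \<ge> X\<^sup>T Q X = Var\<^sub>Z\<close>. Let \<open>N\<^sub>1\<close> be the number of treated units and \<open>s = N min(P, 1 - P)\<close>.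
  By Chebyshev, \<open>\<bar>N\<^sub>1 - N P\<bar> < s/5\<close> outside an event of probability at most
  \<open>25 \<Sum>\<^sub>i\<^sub>j Cov(Z\<^sub>i, Z\<^sub>j) / s\<^sup>2\<close>; then both arms have more than \<open>4s/5\<close> units, and the
  difference-in-means weights \<open>w\<^sub>i\<close> of (d) are centred with
  \<open>\<Sum> w\<^sub>i\<^sup>2 = 1/N\<^sub>1 + 1/N\<^sub>0 \<le> 25/(12 s)\<close>.
  For such a fixed assignment every statistic in (d) is a centred weighted sum
  \<open>\<Sum>\<^sub>i [Y\<^sub>i(a) = y\<^sub>k] w\<^sub>i\<close> of i.i.d.\ Bernoulli variables with mean \<open>q\<^sub>k\<close>. Its moment
  generating function is at most \<open>exp (min(q\<^sub>k, 1 - q\<^sub>k) \<cdot> 19/24 \<cdot> t\<^sup>2 \<Sum> w\<^sub>i\<^sup>2)\<close>, so Markov's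
  inequality for \<open>cosh (t \<cdot>)\<close> bounds its tail by a multiple of \<open>min(q\<^sub>k, 1 - q\<^sub>k)\<close>; since
  \<open>\<Sum>\<^sub>k min(q\<^sub>k, 1 - q\<^sub>k) \<le> 1\<close>, the union bound over all \<open>k\<close> and both arms costs only
  \<open>8 exp (- \<epsilon>\<^sup>2 s / 4)\<close>.\<close>

lemma exp_le_one_plus_quadratic:
  fixes y :: real
  assumes "\<bar>y\<bar> \<le> 1"
  shows "exp y \<le> 1 + y + 19/24 * y\<^sup>2"
proof -
  obtain t where "\<bar>t\<bar> \<le> \<bar>y\<bar>"
    and taylor: "exp y = (\<Sum>m<4. y ^ m / fact m) + exp t / fact 4 * y ^ 4"
    using Maclaurin_exp_le[of y 4] by blast
  with assms have "exp t \<le> exp 1" by simp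
  also have "\<dots> \<le> 3" by (rule exp_le)
  finally have "exp t / fact 4 * y ^ 4 \<le> 3/24 * y ^ 4"
    by (intro mult_right_mono) (auto simp: fact_numeral)
  moreover have "y * y\<^sup>2 \<le> 1 * y\<^sup>2" "y\<^sup>2 * y\<^sup>2 \<le> 1 * y\<^sup>2"
    using assms abs_square_le_1[of y] by (intro mult_right_mono; simp)+
  then have "y ^ 3 \<le> y\<^sup>2" "y ^ 4 \<le> y\<^sup>2"
    by (simp_all add: power_numeral_reduce)
  moreover have "(\<Sum>m<4. y ^ m / fact m) = 1 + y + y\<^sup>2 / 2 + y ^ 3 / 6"
    by (simp add: eval_nat_numeral fact_numeral)
  ultimately show ?thesis
    using taylor by linarith
qed

lemma exp_mult_le_convex_combination:
  fixes t A :: real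
  assumes "0 \<le> t" "t \<le> 1"
  shows "exp (t * A) \<le> 1 - t + t * exp A"
  using convex_onD[OF exp_convex, of t 0 A] assms by simp

lemma cosh_real_minus_one_pos: "u \<noteq> 0 \<Longrightarrow> 0 < cosh u - (1::real)"
  using cosh_real_ge_1[of u] cosh_real_one_iff[of u] by linarith

lemma exp_mult_exp_minus_one_le_cosh:
  fixes x u :: real
  assumes x: "8 < exp x" and u: "48 * x / 25 \<le> u"
  shows "exp x * (exp (19/48 * u) - 1) \<le> 2 * (cosh u - 1)"
proof -
  have "1 < x"
    using x exp_le exp_le_cancel_iff[of x 1] by linarith
  define A where "A = exp (x + 19/48 * u)"
  define v where "v = 29/48 * u - x"
  have "exp u = A * exp v"
    unfolding A_def v_def by (simp flip: exp_add)
  have "1 + 19/25 * x \<le> exp (19/25 * x)" by (rule exp_ge_add_one_self)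
  also have "\<dots> \<le> exp (19/48 * u)" using u by simp
  finally have "8 * (1 + 19/25 * x) \<le> A"
    unfolding A_def exp_add using x \<open>1 < x\<close> by (intro mult_mono) auto
  moreover have "4/25 * x \<le> exp v - 1"
    using exp_ge_add_one_self[of v] u unfolding v_def by linarith
  ultimately have "8 * (1 + 19/25 * x) * (4/25 * x) \<le> A * (exp v - 1)"
    using \<open>1 < x\<close> by (intro mult_mono) auto
  moreover have "2 \<le> 8 * (1 + 19/25 * x) * (4/25 * x)"
    using \<open>1 < x\<close> less_1_mult[of x x] by (simp add: algebra_simps)
  ultimately have "A + 2 \<le> exp u"
    using \<open>exp u = A * exp v\<close> by (simp add: algebra_simps)
  moreover have "exp x * (exp (19/48 * u) - 1) \<le> A"
    unfolding A_def exp_add by simp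
  moreover have "2 * (cosh u - 1) = exp u + exp (- u) - 2"
    by (simp add: cosh_field_def)
  ultimately show ?thesis
    using exp_gt_zero[of "- u"] by linarith
qed

lemma sum_mult_le_product_if_ge:
  fixes a b s :: real
  assumes "0 \<le> s" "4/5 * s \<le> a" "6/5 * s \<le> b"
  shows "12 * (a + b) * s \<le> 25 * (a * b)"
proof -
  have "0 \<le> (a - 4/5 * s) * (b - 6/5 * s)" "0 \<le> s * (a - 4/5 * s)" "0 \<le> s * (b - 6/5 * s)"
    using assms by simp_all
  moreover have "25 * (a * b) - 12 * (a + b) * s
      = 25 * ((a - 4/5 * s) * (b - 6/5 * s)) + 18 * (s * (a - 4/5 * s)) + 8 * (s * (b - 6/5 * s))"
    by (simp add: algebra_simps)
  ultimately show ?thesis by linarith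
qed

text \<open>The product \<open>n\<^sub>1 n\<^sub>0\<close> is concave in \<open>n\<^sub>1\<close> for fixed \<open>n\<^sub>1 + n\<^sub>0\<close>, so it suffices to
  check the endpoints \<open>m \<plusminus> s/5\<close> of the admissible interval.\<close>
lemma split_sizes_lower_bounds:
  fixes n1 n0 m s :: real
  assumes s: "0 < s" "s \<le> m" "s \<le> n1 + n0 - m" and close: "\<bar>n1 - m\<bar> < s/5"
  shows "4/5 * s < n1" "4/5 * s < n0" "12 * (n1 + n0) * s \<le> 25 * (n1 * n0)"
proof -
  define n L U where "n = n1 + n0" and "L = m - s/5" and "U = m + s/5"
  have L: "L < n1" and U: "n1 < U"
    using close unfolding L_def U_def by linarith+
  show "4/5 * s < n1" "4/5 * s < n0"
    using s close by linarith+
  have "0 \<le> (n1 - L) * (U - n1)" using L U by simp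
  then have concave: "n1 * (n - L - U) + L * U \<le> n1 * n0"
    unfolding n_def by (simp add: algebra_simps)
  have "L * (n - L) \<le> n1 * n0 \<or> U * (n - U) \<le> n1 * n0"
  proof (cases "0 \<le> n - L - U")
    case True
    then have "L * (n - L - U) \<le> n1 * (n - L - U)" using L by (intro mult_right_mono) auto
    then show ?thesis using concave by (simp add: algebra_simps)
  next
    case False
    then have "U * (n - L - U) \<le> n1 * (n - L - U)" using U by (intro mult_right_mono_neg) auto
    then show ?thesis using concave by (simp add: algebra_simps)
  qed
  moreover have "12 * n * s \<le> 25 * (L * (n - L))"
    using sum_mult_le_product_if_ge[of s L "n - L"] s unfolding n_def L_def by simp
  moreover have "12 * n * s \<le> 25 * (U * (n - U))"
    using sum_mult_le_product_if_ge[of s "n - U" U] s unfolding n_def U_def by (simp add: ac_simps)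
  ultimately show "12 * (n1 + n0) * s \<le> 25 * (n1 * n0)"
    unfolding n_def by linarith
qed

lemma sum_min_one_minus_le_one:
  fixes q :: "nat \<Rightarrow> real"
  assumes sum_one: "(\<Sum>k<K. q k) = 1"
  shows "(\<Sum>k<K. min (q k) (1 - q k)) \<le> 1"
proof (cases "\<exists>k0<K. 1/2 < q k0")
  case True
  then obtain k0 where k0: "k0 < K" "1/2 < q k0" by blast
  have "(\<Sum>k<K. min (q k) (1 - q k))
      = min (q k0) (1 - q k0) + (\<Sum>k\<in>{..<K} - {k0}. min (q k) (1 - q k))"
    using k0 by (subst sum.remove[of _ k0]) auto
  also have "\<dots> \<le> (1 - q k0) + (\<Sum>k\<in>{..<K} - {k0}. q k)"
    by (intro add_mono sum_mono) auto
  also have "(\<Sum>k\<in>{..<K} - {k0}. q k) = 1 - q k0"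
    using sum_one k0 by (subst sum_diff1) auto
  finally show ?thesis using k0 by linarith
next
  case False
  then have "(\<Sum>k<K. min (q k) (1 - q k)) \<le> (\<Sum>k<K. q k)"
    by (intro sum_mono) auto
  then show ?thesis using sum_one by simp
qed

lemma integrable_measure_pmf_bounded:
  fixes f :: "'a \<Rightarrow> real"
  assumes "\<And>x. \<bar>f x\<bar> \<le> C"
  shows "integrable (measure_pmf p) f"
  by (rule measure_pmf.integrable_const_bound[where B = C]) (use assms in auto)

lemma measure_pair_pmf_le_expectation:
  fixes h :: "'a \<Rightarrow> real"
  assumes fibre: "\<And>a. measure_pmf.prob B {b. (a, b) \<in> S} \<le> h a"
    and nonneg: "\<And>a. 0 \<le> h a" and bounded: "\<And>a. h a \<le> C"
  shows "measure_pmf.prob (pair_pmf A B) S \<le> measure_pmf.expectation A h"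
proof -
  have "integrable (measure_pmf A) h"
    by (rule integrable_measure_pmf_bounded[where C = C]) (use nonneg bounded in auto)
  have "ennreal (measure_pmf.prob (pair_pmf A B) S) = (\<integral>\<^sup>+x. indicator S x \<partial>pair_pmf A B)"
    by (simp add: measure_pmf.emeasure_eq_measure[symmetric])
  also have "\<dots> = (\<integral>\<^sup>+a. \<integral>\<^sup>+b. indicator {b. (a, b) \<in> S} b \<partial>B \<partial>A)"
    unfolding nn_integral_pair_pmf' by (simp add: indicator_def)
  also have "\<dots> \<le> (\<integral>\<^sup>+a. ennreal (h a) \<partial>A)"
    by (intro nn_integral_mono) (simp add: measure_pmf.emeasure_eq_measure ennreal_leI fibre)
  also have "\<dots> = ennreal (measure_pmf.expectation A h)"
    by (rule nn_integral_eq_integral) (use \<open>integrable _ h\<close> nonneg in auto)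
  finally show ?thesis
    using nonneg by (simp add: ennreal_le_iff Bochner_Integration.integral_nonneg)
qed

lemma sum_prob_level_sets_eq_one:
  fixes V :: "'a \<Rightarrow> 'b"
  assumes "finite I" and unique: "\<forall>x\<in>set_pmf p. card {k\<in>I. V x = y k} = 1"
  shows "(\<Sum>k\<in>I. measure_pmf.prob p {x. V x = y k}) = 1"
proof -
  have "(\<Sum>k\<in>I. measure_pmf.prob p {x. V x = y k})
      = measure_pmf.expectation p (\<lambda>x. \<Sum>k\<in>I. indicator {x. V x = y k} x)"
    by (subst Bochner_Integration.integral_sum)
       (auto intro: integrable_measure_pmf_bounded[where C = 1] simp: indicator_def)
  also have "\<dots> = measure_pmf.expectation p (\<lambda>x. 1)"
  proof (rule integral_cong_AE)
    show "AE x in measure_pmf p. (\<Sum>k\<in>I. indicator {x. V x = y k} x) = (1::real)"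
      using unique \<open>finite I\<close> by (intro AE_pmfI) (simp add: indicator_def Int_def)
  qed auto
  finally show ?thesis by simp
qed

lemma variance_sum_eq_sum_covariance:
  fixes X :: "'i \<Rightarrow> 'a \<Rightarrow> real"
  assumes "finite I" and bounded: "\<And>i x. \<bar>X i x\<bar> \<le> B"
  shows "measure_pmf.variance p (\<lambda>x. \<Sum>i\<in>I. X i x) = (\<Sum>i\<in>I. \<Sum>j\<in>I. covariance p (X i) (X j))"
proof -
  define \<mu> where "\<mu> i = measure_pmf.expectation p (X i)" for i
  have int: "integrable (measure_pmf p) (X i)" for i
    by (rule integrable_measure_pmf_bounded) (rule bounded)
  have "0 \<le> B"
    using bounded by (meson abs_ge_zero order.trans)
  have int_prod: "integrable (measure_pmf p) (\<lambda>x. (X i x - \<mu> i) * (X j x - \<mu> j))" for i j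
    by (rule integrable_measure_pmf_bounded[where C = "(B + \<bar>\<mu> i\<bar>) * (B + \<bar>\<mu> j\<bar>)"])
       (use \<open>0 \<le> B\<close> in \<open>auto simp: abs_mult intro!: mult_mono abs_triangle_ineq4[THEN order.trans] add_right_mono bounded\<close>)
  have "measure_pmf.expectation p (\<lambda>x. \<Sum>i\<in>I. X i x) = (\<Sum>i\<in>I. \<mu> i)"
    unfolding \<mu>_def using int by (simp add: Bochner_Integration.integral_sum)
  moreover have "((\<Sum>i\<in>I. X i x) - (\<Sum>i\<in>I. \<mu> i))\<^sup>2
      = (\<Sum>i\<in>I. \<Sum>j\<in>I. (X i x - \<mu> i) * (X j x - \<mu> j))" for x
    by (simp add: sum_subtractf[symmetric] power2_eq_square sum_product)
  ultimately have "measure_pmf.variance p (\<lambda>x. \<Sum>i\<in>I. X i x)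
      = measure_pmf.expectation p (\<lambda>x. \<Sum>i\<in>I. \<Sum>j\<in>I. (X i x - \<mu> i) * (X j x - \<mu> j))"
    by simp
  also have "\<dots> = (\<Sum>i\<in>I. \<Sum>j\<in>I. covariance p (X i) (X j))"
    unfolding covariance_def \<mu>_def[symmetric] using int_prod
    by (simp add: Bochner_Integration.integral_sum integrable_sum)
  finally show ?thesis .
qed

lemma prob_sum_deviation_le_sum_covariance:
  fixes X :: "'i \<Rightarrow> 'a \<Rightarrow> real"
  assumes "finite I" and bounded: "\<And>i x. \<bar>X i x\<bar> \<le> B" and "0 < a"
  shows "measure_pmf.prob p
      {x. a \<le> \<bar>(\<Sum>i\<in>I. X i x) - (\<Sum>i\<in>I. measure_pmf.expectation p (X i))\<bar>}
    \<le> (\<Sum>i\<in>I. \<Sum>j\<in>I. covariance p (X i) (X j)) / a\<^sup>2"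
proof -
  define S where "S x = (\<Sum>i\<in>I. X i x)" for x
  have int: "integrable (measure_pmf p) (X i)" for i
    by (rule integrable_measure_pmf_bounded) (rule bounded)
  have S_bound: "\<bar>S x\<bar> \<le> card I * B" for x
  proof -
    have "\<bar>S x\<bar> \<le> (\<Sum>i\<in>I. \<bar>X i x\<bar>)"
      unfolding S_def by (rule sum_abs)
    also have "\<dots> \<le> card I * B"
      using sum_mono[of I "\<lambda>i. \<bar>X i x\<bar>" "\<lambda>_. B"] bounded by simp
    finally show ?thesis .
  qed
  have "\<bar>(S x)\<^sup>2\<bar> \<le> (card I * B)\<^sup>2" for x
    using power_mono[OF S_bound abs_ge_zero, of x 2] by simp
  then have "integrable (measure_pmf p) (\<lambda>x. (S x)\<^sup>2)"
    by (rule integrable_measure_pmf_bounded)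
  moreover have "measure_pmf.expectation p S = (\<Sum>i\<in>I. measure_pmf.expectation p (X i))"
    unfolding S_def using int by (simp add: Bochner_Integration.integral_sum)
  ultimately have "measure_pmf.prob p {x. a \<le> \<bar>S x - (\<Sum>i\<in>I. measure_pmf.expectation p (X i))\<bar>}
      \<le> measure_pmf.variance p S / a\<^sup>2"
    using measure_pmf.Chebyshev_inequality[of S p a] \<open>0 < a\<close> by simp
  then show ?thesis
    unfolding S_def variance_sum_eq_sum_covariance[OF \<open>finite I\<close> bounded] .
qed

section \<open>Weighted counts of i.i.d.\ samples\<close>

definition weighted_count :: "nat \<Rightarrow> (nat \<Rightarrow> real) \<Rightarrow> ('b \<Rightarrow> bool) \<Rightarrow> (nat \<Rightarrow> 'b) \<Rightarrow> real" where
  "weighted_count N w B ys = (\<Sum>i<N. of_bool (B (ys i)) * w i)"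

lemma abs_weighted_count_le: "\<bar>weighted_count N w B ys\<bar> \<le> (\<Sum>i<N. \<bar>w i\<bar>)"
  unfolding weighted_count_def
  by (rule order.trans[OF sum_abs sum_mono]) simp

lemma weighted_count_not:
  assumes "(\<Sum>i<N. w i) = 0"
  shows "weighted_count N w (\<lambda>x. \<not> B x) ys = - weighted_count N w B ys"
proof -
  have "weighted_count N w (\<lambda>x. \<not> B x) ys = (\<Sum>i<N. w i - of_bool (B (ys i)) * w i)"
    unfolding weighted_count_def by (intro sum.cong) auto
  then show ?thesis
    using assms by (simp add: sum_subtractf weighted_count_def)
qed

lemma integrable_exp_weighted_count:
  "integrable (measure_pmf p) (\<lambda>ys. exp (\<mu> * weighted_count N w B ys))"
proof (rule integrable_measure_pmf_bounded)
  fix ys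
  have "\<mu> * weighted_count N w B ys \<le> \<bar>\<mu>\<bar> * \<bar>weighted_count N w B ys\<bar>"
    by (metis abs_ge_self abs_mult)
  also have "\<dots> \<le> \<bar>\<mu>\<bar> * (\<Sum>i<N. \<bar>w i\<bar>)"
    by (intro mult_left_mono abs_weighted_count_le) simp
  finally show "\<bar>exp (\<mu> * weighted_count N w B ys)\<bar> \<le> exp (\<bar>\<mu>\<bar> * (\<Sum>i<N. \<bar>w i\<bar>))"
    by simp
qed

text \<open>For i.i.d.\ coordinates the exponential factorises into independent factors
  \<open>1 + (e\<^bsup>\<mu> w\<^sub>i\<^esup> - 1) q\<close>; the linear terms cancel because the weights are centred.\<close>
lemma expectation_exp_weighted_count_le:
  assumes centred: "(\<Sum>i<N. w i) = 0" and small: "\<forall>i<N. \<bar>\<mu> * w i\<bar> \<le> 1"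
  shows "measure_pmf.expectation (Pi_pmf {..<N} d (\<lambda>_. F)) (\<lambda>ys. exp (\<mu> * weighted_count N w B ys))
    \<le> exp (measure_pmf.prob F {x. B x} * (19/24 * \<mu>\<^sup>2 * (\<Sum>i<N. (w i)\<^sup>2)))"
proof -
  define q where "q = measure_pmf.prob F {x. B x}"
  define f where "f i x = 1 + (exp (\<mu> * w i) - 1) * indicator {x. B x} x" for i x
  have q: "0 \<le> q" "q \<le> 1" unfolding q_def by auto
  have "exp (\<mu> * weighted_count N w B ys) = (\<Prod>i<N. f i (ys i))" for ys
    unfolding f_def weighted_count_def sum_distrib_left exp_sum[OF finite_lessThan]
    by (intro prod.cong) (auto simp: indicator_def)
  moreover have "measure_pmf.expectation F (f i) = 1 + (exp (\<mu> * w i) - 1) * q" for i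
  proof -
    have "integrable (measure_pmf F) (indicator {x. B x} :: _ \<Rightarrow> real)"
      by (rule integrable_measure_pmf_bounded[where C = 1]) (simp add: indicator_def)
    then show ?thesis
      unfolding f_def q_def by (simp add: measure_pmf.prob_space)
  qed
  moreover have "integrable (measure_pmf F) (f i)" for i
    unfolding f_def
    by (rule integrable_measure_pmf_bounded[where C = "1 + \<bar>exp (\<mu> * w i) - 1\<bar>"])
       (auto simp: indicator_def)
  moreover have "0 \<le> f i x" for i x
    unfolding f_def by (auto simp: indicator_def)
  ultimately have "measure_pmf.expectation (Pi_pmf {..<N} d (\<lambda>_. F))
      (\<lambda>ys. exp (\<mu> * weighted_count N w B ys)) = (\<Prod>i<N. 1 + (exp (\<mu> * w i) - 1) * q)"
    by (simp add: expectation_prod_Pi_pmf)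
  also have "\<dots> \<le> (\<Prod>i<N. exp (q * (\<mu> * w i + 19/24 * (\<mu> * w i)\<^sup>2)))"
  proof (rule prod_mono, rule conjI)
    fix i
    have "0 \<le> (1 - q) + q * exp (\<mu> * w i)" using q by simp
    then show "0 \<le> 1 + (exp (\<mu> * w i) - 1) * q" by (simp add: algebra_simps)
  next
    fix i assume "i \<in> {..<N}"
    then have "exp (\<mu> * w i) - 1 \<le> \<mu> * w i + 19/24 * (\<mu> * w i)\<^sup>2"
      using exp_le_one_plus_quadratic[of "\<mu> * w i"] small by auto
    then have "(exp (\<mu> * w i) - 1) * q \<le> q * (\<mu> * w i + 19/24 * (\<mu> * w i)\<^sup>2)"
      using q by (simp add: mult.commute mult_left_mono)
    then show "1 + (exp (\<mu> * w i) - 1) * q \<le> exp (q * (\<mu> * w i + 19/24 * (\<mu> * w i)\<^sup>2))"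
      using exp_ge_add_one_self[of "(exp (\<mu> * w i) - 1) * q"] by (meson order.trans exp_le_cancel_iff)
  qed
  also have "\<dots> = exp (q * \<mu> * (\<Sum>i<N. w i) + q * (19/24 * \<mu>\<^sup>2 * (\<Sum>i<N. (w i)\<^sup>2)))"
    by (simp add: exp_sum[symmetric] sum.distrib sum_distrib_left algebra_simps power2_eq_square)
  finally show ?thesis
    using centred unfolding q_def by simp
qed

text \<open>Applying the bound to \<open>B\<close> or to its complement gives the better of the two.\<close>
lemma expectation_exp_weighted_count_le_min:
  fixes F :: "'b pmf" and B :: "'b \<Rightarrow> bool"
  assumes centred: "(\<Sum>i<N. w i) = 0" and small: "\<forall>i<N. \<bar>\<mu> * w i\<bar> \<le> 1"
  defines "q \<equiv> measure_pmf.prob F {x. B x}"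
  shows "measure_pmf.expectation (Pi_pmf {..<N} d (\<lambda>_. F)) (\<lambda>ys. exp (\<mu> * weighted_count N w B ys))
    \<le> exp (min q (1 - q) * (19/24 * \<mu>\<^sup>2 * (\<Sum>i<N. (w i)\<^sup>2)))"
proof -
  define c where "c = 19/24 * \<mu>\<^sup>2 * (\<Sum>i<N. (w i)\<^sup>2)"
  define E where "E = measure_pmf.expectation (Pi_pmf {..<N} d (\<lambda>_. F))
    (\<lambda>ys. exp (\<mu> * weighted_count N w B ys))"
  have "E \<le> exp (q * c)"
    using expectation_exp_weighted_count_le[OF centred small] unfolding E_def q_def c_def .
  moreover have "E \<le> exp ((1 - q) * c)"
  proof -
    have "measure_pmf.prob F {x. \<not> B x} = 1 - q"
      unfolding q_def using measure_pmf.prob_compl[of "{x. B x}" F] by (simp add: Compl_eq_Diff_UNIV Collect_neg_eq)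
    moreover have "\<forall>i<N. \<bar>- \<mu> * w i\<bar> \<le> 1" using small by simp
    ultimately show ?thesis
      using expectation_exp_weighted_count_le[OF centred, of "- \<mu>" d F "\<lambda>x. \<not> B x"]
      unfolding E_def c_def weighted_count_not[OF centred] by simp
  qed
  ultimately show ?thesis
    unfolding E_def[symmetric] c_def[symmetric] by (simp add: min_def)
qed

text \<open>Markov's inequality for \<open>cosh (t D) - 1\<close>, which controls both tails of \<open>D\<close> at once.\<close>
lemma prob_abs_gt_le_cosh:
  fixes D :: "'a \<Rightarrow> real"
  assumes "0 < t" "0 \<le> a"
    and int: "integrable (measure_pmf p) (\<lambda>x. exp (t * D x))"
      "integrable (measure_pmf p) (\<lambda>x. exp (- t * D x))"
  shows "(cosh (t * a) - 1) * measure_pmf.prob p {x. a < \<bar>D x\<bar>}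
    \<le> ((measure_pmf.expectation p (\<lambda>x. exp (t * D x)) - 1)
      + (measure_pmf.expectation p (\<lambda>x. exp (- t * D x)) - 1)) / 2"
proof -
  have pointwise: "(cosh (t * a) - 1) * indicator {x. a < \<bar>D x\<bar>} x \<le> cosh (t * D x) - 1" for x
  proof (cases "a < \<bar>D x\<bar>")
    case True
    then have "cosh (t * a) \<le> cosh \<bar>t * D x\<bar>"
      using assms(1,2) by (subst cosh_real_nonneg_le_iff) (auto simp: abs_mult)
    then show ?thesis using True by simp
  qed (simp add: cosh_real_ge_1)
  have "(cosh (t * a) - 1) * measure_pmf.prob p {x. a < \<bar>D x\<bar>}
      = measure_pmf.expectation p (\<lambda>x. (cosh (t * a) - 1) * indicator {x. a < \<bar>D x\<bar>} x)"
    by simp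
  also have "\<dots> \<le> measure_pmf.expectation p (\<lambda>x. cosh (t * D x) - 1)"
  proof (rule integral_mono[OF _ _ pointwise])
    show "integrable (measure_pmf p) (\<lambda>x. (cosh (t * a) - 1) * indicator {x. a < \<bar>D x\<bar>} x)"
      by (rule integrable_measure_pmf_bounded[where C = "\<bar>cosh (t * a) - 1\<bar>"])
         (simp add: indicator_def)
    show "integrable (measure_pmf p) (\<lambda>x. cosh (t * D x) - 1)"
      unfolding cosh_field_def using int by simp
  qed
  also have "\<dots> = ((measure_pmf.expectation p (\<lambda>x. exp (t * D x)) - 1)
      + (measure_pmf.expectation p (\<lambda>x. exp (- t * D x)) - 1)) / 2"
    using int by (simp add: cosh_field_def measure_pmf.prob_space)
  finally show ?thesis .
qed

lemma prob_weighted_count_tail_le: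
  fixes F :: "'b pmf" and B :: "'b \<Rightarrow> bool"
  assumes centred: "(\<Sum>i<N. w i) = 0" and sq: "(\<Sum>i<N. (w i)\<^sup>2) = \<sigma>2"
    and "0 < \<sigma>2" and bounded: "\<forall>i<N. \<bar>w i\<bar> \<le> \<sigma>2" and "0 < \<epsilon>" "\<epsilon> \<le> 1"
  defines "q \<equiv> measure_pmf.prob F {x. B x}" and "u \<equiv> \<epsilon>\<^sup>2 / \<sigma>2"
  shows "(cosh u - 1) * measure_pmf.prob (Pi_pmf {..<N} d (\<lambda>_. F)) {ys. \<epsilon> < \<bar>weighted_count N w B ys\<bar>}
    \<le> min q (1 - q) * (2 * (exp (19/48 * u) - 1))"
proof -
  define p where "p = Pi_pmf {..<N} d (\<lambda>_. F)"
  define m where "m = min q (1 - q)"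
  define t where "t = \<epsilon> / \<sigma>2"
  have "0 < t" unfolding t_def using assms by simp
  have "0 \<le> m" "m \<le> 1/2"
    unfolding m_def q_def min_def by auto
  have mgf: "measure_pmf.expectation p (\<lambda>ys. exp (\<mu> * weighted_count N w B ys))
      \<le> 1 - 2 * m + 2 * m * exp (19/48 * u)" if "\<bar>\<mu>\<bar> = t" for \<mu>
  proof -
    have "\<bar>\<mu> * w i\<bar> \<le> 1" if "i < N" for i
    proof -
      have "\<bar>\<mu> * w i\<bar> \<le> t * \<sigma>2"
        using \<open>\<bar>\<mu>\<bar> = t\<close> bounded \<open>0 < t\<close> \<open>i < N\<close> by (simp add: abs_mult mult_left_mono)
      also have "\<dots> = \<epsilon>" unfolding t_def using \<open>0 < \<sigma>2\<close> by simp
      finally show ?thesis using \<open>\<epsilon> \<le> 1\<close> by simp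
    qed
    then have "measure_pmf.expectation p (\<lambda>ys. exp (\<mu> * weighted_count N w B ys))
        \<le> exp (m * (19/24 * \<mu>\<^sup>2 * (\<Sum>i<N. (w i)\<^sup>2)))"
      unfolding p_def m_def q_def by (intro expectation_exp_weighted_count_le_min centred) auto
    also have "19/24 * \<mu>\<^sup>2 * (\<Sum>i<N. (w i)\<^sup>2) = 2 * (19/48 * u)"
    proof -
      have "\<mu>\<^sup>2 = t\<^sup>2" by (metis power2_abs \<open>\<bar>\<mu>\<bar> = t\<close>)
      then show ?thesis
        unfolding sq u_def t_def using \<open>0 < \<sigma>2\<close> by (simp add: power2_eq_square)
    qed
    also have "exp (m * (2 * (19/48 * u))) \<le> 1 - 2 * m + 2 * m * exp (19/48 * u)"
      using exp_mult_le_convex_combination[of "2 * m" "19/48 * u"] \<open>0 \<le> m\<close> \<open>m \<le> 1/2\<close>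
      by (simp add: algebra_simps)
    finally show ?thesis .
  qed
  have "u = t * \<epsilon>"
    unfolding u_def t_def by (simp add: power2_eq_square)
  have "(cosh u - 1) * measure_pmf.prob p {ys. \<epsilon> < \<bar>weighted_count N w B ys\<bar>}
      \<le> ((measure_pmf.expectation p (\<lambda>ys. exp (t * weighted_count N w B ys)) - 1)
        + (measure_pmf.expectation p (\<lambda>ys. exp (- t * weighted_count N w B ys)) - 1)) / 2"
    unfolding \<open>u = t * \<epsilon>\<close>
    using \<open>0 < t\<close> \<open>0 < \<epsilon>\<close> by (intro prob_abs_gt_le_cosh integrable_exp_weighted_count) auto
  also have "\<dots> \<le> ((1 - 2 * m + 2 * m * exp (19/48 * u) - 1) + (1 - 2 * m + 2 * m * exp (19/48 * u) - 1)) / 2"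
    using mgf[of t] mgf[of "- t"] \<open>0 < t\<close> by (intro divide_right_mono add_mono diff_right_mono) auto
  also have "\<dots> = m * (2 * (exp (19/48 * u) - 1))"
    by (simp add: field_simps)
  finally show ?thesis
    unfolding p_def m_def .
qed

lemma sum_prob_weighted_count_tails_le:
  fixes F :: "'b pmf" and V :: "'b \<Rightarrow> 'c" and y :: "nat \<Rightarrow> 'c"
  assumes unique: "\<forall>x\<in>set_pmf F. card {k\<in>{..<K}. V x = y k} = 1"
    and centred: "(\<Sum>i<N. w i) = 0" and sq: "(\<Sum>i<N. (w i)\<^sup>2) = \<sigma>2"
    and "0 < \<sigma>2" and bounded: "\<forall>i<N. \<bar>w i\<bar> \<le> \<sigma>2" and "0 < \<epsilon>" "\<epsilon> \<le> 1"
    and x: "8 < exp x" "48 * x / 25 \<le> \<epsilon>\<^sup>2 / \<sigma>2"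
  shows "(\<Sum>k<K. measure_pmf.prob (Pi_pmf {..<N} d (\<lambda>_. F))
      {ys. \<epsilon> < \<bar>weighted_count N w (\<lambda>x. V x = y k) ys\<bar>}) \<le> 4 * exp (- x)"
proof -
  define u where "u = \<epsilon>\<^sup>2 / \<sigma>2"
  define q where "q k = measure_pmf.prob F {x. V x = y k}" for k
  define S where "S = (\<Sum>k<K. measure_pmf.prob (Pi_pmf {..<N} d (\<lambda>_. F))
      {ys. \<epsilon> < \<bar>weighted_count N w (\<lambda>x. V x = y k) ys\<bar>})"
  have "0 < cosh u - 1"
    using \<open>0 < \<sigma>2\<close> \<open>0 < \<epsilon>\<close> unfolding u_def by (intro cosh_real_minus_one_pos) simp
  have "(cosh u - 1) * S \<le> (\<Sum>k<K. min (q k) (1 - q k) * (2 * (exp (19/48 * u) - 1)))"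
    unfolding S_def sum_distrib_left q_def u_def
    by (intro sum_mono prob_weighted_count_tail_le assms)
  also have "\<dots> = (\<Sum>k<K. min (q k) (1 - q k)) * (2 * (exp (19/48 * u) - 1))"
    by (rule sum_distrib_right[symmetric])
  also have "\<dots> \<le> 1 * (2 * (exp (19/48 * u) - 1))"
  proof (rule mult_right_mono)
    show "(\<Sum>k<K. min (q k) (1 - q k)) \<le> 1"
      by (rule sum_min_one_minus_le_one) (auto simp: q_def sum_prob_level_sets_eq_one[OF _ unique])
    show "0 \<le> 2 * (exp (19/48 * u) - 1)"
      using \<open>0 < \<sigma>2\<close> by (simp add: u_def)
  qed
  also have "\<dots> \<le> 2 * (2 * exp (- x) * (cosh u - 1))"
    using exp_mult_exp_minus_one_le_cosh[OF x[folded u_def]] by (simp add: exp_minus field_simps)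
  also have "\<dots> = (cosh u - 1) * (4 * exp (- x))"
    by simp
  finally have "S \<le> 4 * exp (- x)"
    using \<open>0 < cosh u - 1\<close> by (simp add: mult_le_cancel_left_pos)
  then show ?thesis
    unfolding S_def .
qed

section \<open>Difference-in-means weights\<close>

definition n_treated :: "nat \<Rightarrow> (nat \<Rightarrow> bool) \<Rightarrow> real" where
  "n_treated N z = real (card {i\<in>{..<N}. z i})"

definition n_control :: "nat \<Rightarrow> (nat \<Rightarrow> bool) \<Rightarrow> real" where
  "n_control N z = real N - n_treated N z"

definition dm_weight :: "nat \<Rightarrow> (nat \<Rightarrow> bool) \<Rightarrow> nat \<Rightarrow> real" where
  "dm_weight N z i = of_bool (z i) / n_treated N z - (1 - of_bool (z i)) / n_control N z"

lemma constr_d_iff_weighted_count: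
  "constr_d N K \<epsilon> z X \<longleftrightarrow>
     (\<forall>a. \<forall>k<K. \<bar>weighted_count N (dm_weight N z) (\<lambda>i. X a i k) (\<lambda>i. i)\<bar> \<le> \<epsilon>)"
  unfolding constr_d_def dm_weight_def weighted_count_def n_control_def n_treated_def Let_def ..

lemma n_treated_eq_sum: "n_treated N z = (\<Sum>i<N. of_bool (z i))"
  by (simp add: n_treated_def Int_def)

lemma n_control_eq_sum: "n_control N z = (\<Sum>i<N. 1 - of_bool (z i))"
  by (simp add: n_control_def n_treated_eq_sum sum_subtractf)

context
  fixes N :: nat and z :: "nat \<Rightarrow> bool"
  assumes treated: "0 < n_treated N z" and control: "0 < n_control N z"
begin

lemma sum_dm_weight: "(\<Sum>i<N. dm_weight N z i) = 0"
proof -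
  have "(\<Sum>i<N. dm_weight N z i)
      = (\<Sum>i<N. of_bool (z i)) / n_treated N z - (\<Sum>i<N. 1 - of_bool (z i)) / n_control N z"
    unfolding dm_weight_def by (simp add: sum_subtractf sum_divide_distrib[symmetric] del: sum_of_bool_eq)
  then show ?thesis
    using treated control by (simp flip: n_treated_eq_sum n_control_eq_sum)
qed

lemma sum_dm_weight_squared: "(\<Sum>i<N. (dm_weight N z i)\<^sup>2) = 1 / n_treated N z + 1 / n_control N z"
proof -
  have "(dm_weight N z i)\<^sup>2
      = of_bool (z i) / (n_treated N z)\<^sup>2 + (1 - of_bool (z i)) / (n_control N z)\<^sup>2" for i
    by (cases "z i") (auto simp: dm_weight_def power2_eq_square)
  then show ?thesis
    using treated control
    by (simp add: sum.distrib sum_divide_distrib[symmetric] power2_eq_square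
        flip: n_treated_eq_sum n_control_eq_sum)
qed

lemma abs_dm_weight_le: "\<bar>dm_weight N z i\<bar> \<le> 1 / n_treated N z + 1 / n_control N z"
  using treated control by (auto simp: dm_weight_def)

lemma abs_weighted_count_dm_weight_le_one: "\<bar>weighted_count N (dm_weight N z) B ys\<bar> \<le> 1"
proof -
  define T where "T = (\<Sum>i<N. of_bool (B (ys i)) * of_bool (z i) :: real)"
  define C where "C = (\<Sum>i<N. of_bool (B (ys i)) * (1 - of_bool (z i)) :: real)"
  have "0 \<le> T" "T \<le> n_treated N z"
    unfolding T_def n_treated_eq_sum by (intro sum_nonneg sum_mono; simp)+
  moreover have "0 \<le> C" "C \<le> n_control N z"
    unfolding C_def n_control_eq_sum by (intro sum_nonneg sum_mono; simp)+
  ultimately have "0 \<le> T / n_treated N z" "T / n_treated N z \<le> 1"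
    "0 \<le> C / n_control N z" "C / n_control N z \<le> 1"
    using treated control by simp_all
  moreover have "weighted_count N (dm_weight N z) B ys = T / n_treated N z - C / n_control N z"
    unfolding weighted_count_def dm_weight_def T_def C_def
    by (simp add: sum_subtractf sum_divide_distrib[symmetric] algebra_simps)
  ultimately show ?thesis by linarith
qed

end

section \<open>Feasibility of the true indicators\<close>

lemma card_po_level_set_eq_one:
  assumes "p \<in> y ` {..<K} \<times> y ` {..<K}" and "inj_on y {..<K}"
  shows "card {k\<in>{..<K}. po p a = y k} = 1"
proof -
  have "po p a \<in> y ` {..<K}"
    using assms(1) unfolding po_def by (auto simp: mem_Times_iff)
  then obtain k0 where "k0 < K" "po p a = y k0" by auto
  with assms(2) have "{k\<in>{..<K}. po p a = y k} = {k0}" by (auto simp: inj_on_def)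
  then show ?thesis by simp
qed

lemma constr_d_Xtrue_iff:
  "constr_d N K \<epsilon> z (Xtrue N K y ys) \<longleftrightarrow>
     (\<forall>a. \<forall>k<K. \<bar>weighted_count N (dm_weight N z) (\<lambda>x. po x a = y k) ys\<bar> \<le> \<epsilon>)"
proof -
  have "weighted_count N w (\<lambda>i. Xtrue N K y ys a i k) (\<lambda>i. i) = weighted_count N w (\<lambda>x. po x a = y k) ys"
    if "k < K" for w a k
    unfolding weighted_count_def Xtrue_def using that by (intro sum.cong) auto
  then show ?thesis
    unfolding constr_d_iff_weighted_count by auto
qed

lemma finite_feasible: "finite (feasible N K y supp \<epsilon> z yobs)"
proof (rule finite_subset)
  show "feasible N K y supp \<epsilon> z yobs \<subseteq> (\<lambda>S a i k. (a, i, k) \<in> S) ` Pow (UNIV \<times> {..<N} \<times> {..<K})"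
  proof
    fix X assume "X \<in> feasible N K y supp \<epsilon> z yobs"
    then have "{(a, i, k). X a i k} \<in> Pow (UNIV \<times> {..<N} \<times> {..<K})"
      unfolding feasible_def by (auto simp: not_le[symmetric])
    moreover have "X = (\<lambda>a i k. (a, i, k) \<in> {(a, i, k). X a i k})" by simp
    ultimately show "X \<in> (\<lambda>S a i k. (a, i, k) \<in> S) ` Pow (UNIV \<times> {..<N} \<times> {..<K})"
      by blast
  qed
qed simp

lemma Xtrue_feasible:
  fixes F :: "(real \<times> real) pmf"
  assumes support: "\<forall>i<N. ys i \<in> set_pmf F"
    and F_supp: "set_pmf F \<subseteq> y ` {..<K} \<times> y ` {..<K}" and y_inj: "inj_on y {..<K}"
    and balance: "constr_d N K \<epsilon> z (Xtrue N K y ys)"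
  shows "Xtrue N K y ys \<in> feasible N K y (\<lambda>a. set_pmf (map_pmf (\<lambda>p. po p a) F)) \<epsilon> z (Yobs z ys)"
proof -
  have "card {k\<in>{..<K}. Xtrue N K y ys a i k} = 1" if "i < N" for a i
  proof -
    have "{k\<in>{..<K}. Xtrue N K y ys a i k} = {k\<in>{..<K}. po (ys i) a = y k}"
      using that unfolding Xtrue_def by auto
    also have "card \<dots> = 1"
      using support F_supp that by (intro card_po_level_set_eq_one y_inj) auto
    finally show ?thesis .
  qed
  moreover have "y k \<in> set_pmf (map_pmf (\<lambda>p. po p a) F)" if "Xtrue N K y ys a i k" for a i k
    using that support unfolding Xtrue_def by (auto intro!: image_eqI[where x = "ys i"])
  ultimately show ?thesis
    using balance unfolding feasible_def by (auto simp: Xtrue_def Yobs_def)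
qed

section \<open>Balance of the true indicators\<close>

lemma prob_Xtrue_unbalanced_fixed_assignment_le:
  fixes F :: "(real \<times> real) pmf" and y :: "nat \<Rightarrow> real"
  assumes F_supp: "set_pmf F \<subseteq> y ` {..<K} \<times> y ` {..<K}" and y_inj: "inj_on y {..<K}"
    and "0 < \<epsilon>" and treated: "0 < n_treated N z" and control: "0 < n_control N z"
    and x: "48 * x / 25 \<le> \<epsilon>\<^sup>2 / (1 / n_treated N z + 1 / n_control N z)"
  shows "measure_pmf.prob (Pi_pmf {..<N} (0, 0) (\<lambda>_. F)) {ys. \<not> constr_d N K \<epsilon> z (Xtrue N K y ys)}
    \<le> 8 * exp (- x)"
proof -
  define p where "p = Pi_pmf {..<N} (0::real, 0::real) (\<lambda>_. F)"
  define w where "w = dm_weight N z"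
  define E where "E a k = {ys. \<epsilon> < \<bar>weighted_count N w (\<lambda>x. po x a = y k) ys\<bar>}" for a k
  have unbalanced: "{ys. \<not> constr_d N K \<epsilon> z (Xtrue N K y ys)} = (\<Union>a. \<Union>k\<in>{..<K}. E a k)"
    unfolding constr_d_Xtrue_iff E_def w_def by (auto simp: not_le)
  consider "exp x \<le> 8" | "1 < \<epsilon>" | "8 < exp x" "\<epsilon> \<le> 1" by linarith
  then show ?thesis
  proof cases
    case 1
    then have "1 \<le> 8 * exp (- x)" by (simp add: exp_minus field_simps)
    then show ?thesis by (rule order.trans[OF measure_pmf.prob_le_1])
  next
    case 2
    have "\<bar>weighted_count N w B ys\<bar> \<le> \<epsilon>" for B :: "real \<times> real \<Rightarrow> bool" and ys
      unfolding w_def using 2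
      by (intro order.trans[OF abs_weighted_count_dm_weight_le_one[OF treated control]]) simp
    then have "E a k = {}" for a k
      unfolding E_def by (auto simp: not_less)
    then show ?thesis by (simp add: unbalanced)
  next
    case 3
    have "0 < 1 / n_treated N z + 1 / n_control N z"
      using treated control by (intro add_pos_pos) simp_all
    have arm: "(\<Sum>k<K. measure_pmf.prob p (E a k)) \<le> 4 * exp (- x)" for a
      unfolding p_def E_def
    proof (rule sum_prob_weighted_count_tails_le)
      show "\<forall>x\<in>set_pmf F. card {k\<in>{..<K}. po x a = y k} = 1"
      proof
        fix x assume "x \<in> set_pmf F"
        with F_supp show "card {k\<in>{..<K}. po x a = y k} = 1"
          by (intro card_po_level_set_eq_one y_inj) auto
      qed
      show "(\<Sum>i<N. w i) = 0" "(\<Sum>i<N. (w i)\<^sup>2) = 1 / n_treated N z + 1 / n_control N z"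
        "\<forall>i<N. \<bar>w i\<bar> \<le> 1 / n_treated N z + 1 / n_control N z"
        unfolding w_def using sum_dm_weight sum_dm_weight_squared abs_dm_weight_le treated control by auto
    qed (fact \<open>0 < 1 / n_treated N z + 1 / n_control N z\<close> \<open>0 < \<epsilon>\<close> 3 x)+
    have "measure_pmf.prob p (\<Union>a. \<Union>k\<in>{..<K}. E a k)
        \<le> (\<Sum>a\<in>UNIV. \<Sum>k<K. measure_pmf.prob p (E a k))"
      by (rule order.trans[OF measure_pmf.finite_measure_subadditive_finite
            sum_mono[OF measure_pmf.finite_measure_subadditive_finite]]) auto
    also have "\<dots> \<le> (\<Sum>a\<in>(UNIV :: bool set). 4 * exp (- x))"
      by (intro sum_mono arm)
    finally show ?thesis
      unfolding unbalanced p_def by simp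
  qed
qed

lemma prob_Xtrue_unbalanced_near_mean_le:
  fixes F :: "(real \<times> real) pmf" and y :: "nat \<Rightarrow> real"
  assumes F_supp: "set_pmf F \<subseteq> y ` {..<K} \<times> y ` {..<K}" and y_inj: "inj_on y {..<K}"
    and "0 < \<epsilon>" and s: "0 < s" "s \<le> m" "s \<le> real N - m"
    and near: "\<bar>n_treated N z - m\<bar> < s / 5"
  shows "measure_pmf.prob (Pi_pmf {..<N} (0, 0) (\<lambda>_. F)) {ys. \<not> constr_d N K \<epsilon> z (Xtrue N K y ys)}
    \<le> 8 * exp (- (\<epsilon>\<^sup>2 * s / 4))"
proof (rule prob_Xtrue_unbalanced_fixed_assignment_le[OF F_supp y_inj \<open>0 < \<epsilon>\<close>])
  define n1 n0 where "n1 = n_treated N z" and "n0 = n_control N z"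
  have "n1 + n0 = real N" unfolding n1_def n0_def n_control_def by simp
  then have "4/5 * s < n1" "4/5 * s < n0" and sizes: "12 * real N * s \<le> 25 * (n1 * n0)"
    using split_sizes_lower_bounds[of s m n1 n0] s near unfolding n1_def by auto
  then show "0 < n_treated N z" "0 < n_control N z"
    using s unfolding n1_def n0_def by linarith+
  have "48 * (\<epsilon>\<^sup>2 * s / 4) / 25 = \<epsilon>\<^sup>2 * (12 * s / 25)"
    by simp
  also have "\<dots> \<le> \<epsilon>\<^sup>2 * (n1 * n0 / real N)"
    using sizes \<open>n1 + n0 = real N\<close> \<open>4/5 * s < n1\<close> \<open>4/5 * s < n0\<close> s
    by (intro mult_left_mono) (simp_all add: field_simps)
  also have "\<dots> = \<epsilon>\<^sup>2 / (1 / n1 + 1 / n0)"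
    using \<open>n1 + n0 = real N\<close> \<open>4/5 * s < n1\<close> \<open>4/5 * s < n0\<close> s by (simp add: field_simps)
  finally show "48 * (\<epsilon>\<^sup>2 * s / 4) / 25 \<le> \<epsilon>\<^sup>2 / (1 / n_treated N z + 1 / n_control N z)"
    unfolding n1_def n0_def .
qed

lemma sum_covariance_nonneg:
  fixes X :: "'i \<Rightarrow> 'a \<Rightarrow> real"
  assumes "finite I" and "\<And>i x. \<bar>X i x\<bar> \<le> B"
  shows "0 \<le> (\<Sum>i\<in>I. \<Sum>j\<in>I. covariance p (X i) (X j))"
  unfolding variance_sum_eq_sum_covariance[OF assms, symmetric] by simp

text \<open>Chebyshev's inequality gives the constant \<open>25\<close>, weakened here to the \<open>32\<close> of the statement.\<close>
lemma prob_Xtrue_unbalanced_le: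
  fixes pZ :: "(nat \<Rightarrow> bool) pmf" and F :: "(real \<times> real) pmf" and y :: "nat \<Rightarrow> real"
  assumes F_supp: "set_pmf F \<subseteq> y ` {..<K} \<times> y ` {..<K}" and y_inj: "inj_on y {..<K}"
    and "0 < \<epsilon>" and s: "0 < s" "s \<le> (\<Sum>i<N. measure_pmf.prob pZ {z. z i})"
      "s \<le> real N - (\<Sum>i<N. measure_pmf.prob pZ {z. z i})"
  shows "measure_pmf.prob (pair_pmf pZ (Pi_pmf {..<N} (0, 0) (\<lambda>_. F)))
      {(z, ys). \<not> constr_d N K \<epsilon> z (Xtrue N K y ys)}
    \<le> 8 * exp (- (\<epsilon>\<^sup>2 * s / 4))
      + 32 / s\<^sup>2 * (\<Sum>i<N. \<Sum>j<N. covariance pZ (\<lambda>z. of_bool (z i)) (\<lambda>z. of_bool (z j)))"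
proof -
  define m where "m = (\<Sum>i<N. measure_pmf.prob pZ {z. z i})"
  define CV where "CV = (\<Sum>i<N. \<Sum>j<N. covariance pZ (\<lambda>z. of_bool (z i)) (\<lambda>z. of_bool (z j)) :: real)"
  define far where "far = {z. s / 5 \<le> \<bar>n_treated N z - m\<bar>}"
  define c where "c = 8 * exp (- (\<epsilon>\<^sup>2 * s / 4))"
  have "0 \<le> CV" unfolding CV_def by (rule sum_covariance_nonneg[where B = 1]) auto
  have "(\<lambda>z :: nat \<Rightarrow> bool. of_bool (z i)) = (indicator {z. z i} :: _ \<Rightarrow> real)" for i
    by (auto simp: indicator_def)
  then have "measure_pmf.expectation pZ (\<lambda>z. of_bool (z i)) = measure_pmf.prob pZ {z. z i}" for i
    by simp
  then have chebyshev: "measure_pmf.prob pZ far \<le> CV / (s / 5)\<^sup>2"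
    unfolding far_def m_def CV_def n_treated_eq_sum
    using prob_sum_deviation_le_sum_covariance[of "{..<N}" "\<lambda>i z. of_bool (z i)" 1 "s / 5" pZ] s
    by simp
  have fibre: "measure_pmf.prob (Pi_pmf {..<N} (0, 0) (\<lambda>_. F))
      {ys. (z, ys) \<in> {(z, ys). \<not> constr_d N K \<epsilon> z (Xtrue N K y ys)}} \<le> indicator far z + c" for z
  proof (cases "z \<in> far")
    case True
    then show ?thesis
      using measure_pmf.prob_le_1 exp_gt_zero unfolding c_def by (smt (verit) indicator_simps(1))
  next
    case False
    then show ?thesis
      using prob_Xtrue_unbalanced_near_mean_le[OF F_supp y_inj \<open>0 < \<epsilon>\<close> s(1), of m]
        s unfolding far_def m_def c_def by simp
  qed
  have "measure_pmf.prob (pair_pmf pZ (Pi_pmf {..<N} (0, 0) (\<lambda>_. F)))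
      {(z, ys). \<not> constr_d N K \<epsilon> z (Xtrue N K y ys)} \<le> measure_pmf.expectation pZ (\<lambda>z. indicator far z + c)"
    using fibre by (rule measure_pair_pmf_le_expectation[where C = "1 + c"]) (auto simp: c_def indicator_def)
  also have "\<dots> = measure_pmf.prob pZ far + c"
    by (subst Bochner_Integration.integral_add)
       (auto intro: integrable_measure_pmf_bounded[where C = 1] simp: indicator_def measure_pmf.prob_space)
  also have "\<dots> \<le> 25 / s\<^sup>2 * CV + c"
    using chebyshev by (simp add: power_divide ac_simps)
  also have "\<dots> \<le> c + 32 / s\<^sup>2 * CV"
    using \<open>0 \<le> CV\<close> by (simp add: divide_right_mono mult_right_mono)
  finally show ?thesis
    unfolding c_def CV_def .
qed

lemma quad_le_Vstar:
  "X \<in> feasible N K y supp \<epsilon> z yobs \<Longrightarrow> quad N K Q X \<le> Vstar N K Q y supp \<epsilon> z yobs"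
  unfolding Vstar_def by (intro Max_ge finite_imageI finite_feasible imageI)

theorem theorem1:
  fixes N K :: nat and y :: "nat \<Rightarrow> real" and \<epsilon> :: real
    and F :: "(real \<times> real) pmf"
    and pZ :: "(nat \<Rightarrow> bool) pmf"
    and tauhat :: "(nat \<Rightarrow> bool) \<Rightarrow> (nat \<Rightarrow> real) \<Rightarrow> real"
    and Q :: "bool \<times> nat \<times> nat \<Rightarrow> bool \<times> nat \<times> nat \<Rightarrow> real"
  defines "pY \<equiv> Pi_pmf {..<N} (0, 0) (\<lambda>_. F)"
  defines "supp \<equiv> (\<lambda>a. set_pmf (map_pmf (\<lambda>p. po p a) F))"
  defines "Pr1 \<equiv> (\<lambda>i. measure_pmf.prob pZ {z. z i})"
  defines "P \<equiv> (\<Sum>i<N. Pr1 i) / real N"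
  defines "Pt \<equiv> min P (1 - P)"
  defines "VarZ \<equiv> (\<lambda>ys. measure_pmf.variance pZ (\<lambda>z. tauhat z (Yobs z ys)))"
  defines "\<beta> \<equiv> 8 * exp (- (\<epsilon>\<^sup>2 / 4) * real N * Pt)
      + 32 / (real N ^ 2 * Pt ^ 2) *
        (\<Sum>i<N. \<Sum>j<N. covariance pZ (\<lambda>z. of_bool (z i)) (\<lambda>z. of_bool (z j)))"
  assumes y_inj: "inj_on y {..<K}"
    and F_supp: "set_pmf F \<subseteq> (y ` {..<K}) \<times> (y ` {..<K})"
    and Pt_pos: "Pt > 0"
    and eps_pos: "\<epsilon> > 0"
    and Q_sym: "\<forall>u\<in>UNIV \<times> {..<N} \<times> {..<K}. \<forall>v\<in>UNIV \<times> {..<N} \<times> {..<K}. Q u v = Q v u"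
    and Q_var: "\<forall>ys\<in>set_pmf pY. VarZ ys = quad N K Q (Xtrue N K y ys)"
  shows "measure_pmf.prob (pair_pmf pZ pY) {(z, ys). constr_d N K \<epsilon> z (Xtrue N K y ys)} \<ge> 1 - \<beta>
       \<and> measure_pmf.prob (pair_pmf pZ pY)
           {(z, ys). feasible N K y supp \<epsilon> z (Yobs z ys) \<noteq> {}
                     \<and> Vstar N K Q y supp \<epsilon> z (Yobs z ys) \<ge> VarZ ys} \<ge> 1 - \<beta>"
proof
  have "0 < N"
    using Pt_pos unfolding Pt_def P_def by (cases N) auto
  then have "0 < real N * Pt" "real N * Pt \<le> (\<Sum>i<N. Pr1 i)" "real N * Pt \<le> real N - (\<Sum>i<N. Pr1 i)"
    using Pt_pos unfolding Pt_def P_def by (auto simp: min_def field_simps split: if_splits)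
  from prob_Xtrue_unbalanced_le[OF F_supp y_inj eps_pos this[unfolded Pr1_def]]
  have "measure_pmf.prob (pair_pmf pZ pY) {(z, ys). \<not> constr_d N K \<epsilon> z (Xtrue N K y ys)} \<le> \<beta>"
    unfolding \<beta>_def pY_def by (simp add: power_mult_distrib mult_ac)
  moreover have "{(z, ys). constr_d N K \<epsilon> z (Xtrue N K y ys)}
      = space (measure_pmf (pair_pmf pZ pY)) - {(z, ys). \<not> constr_d N K \<epsilon> z (Xtrue N K y ys)}"
    by auto
  ultimately show "1 - \<beta> \<le> measure_pmf.prob (pair_pmf pZ pY) {(z, ys). constr_d N K \<epsilon> z (Xtrue N K y ys)}"
    by (simp only: measure_pmf.prob_compl sets_measure_pmf UNIV_I)
  also have "\<dots> \<le> measure_pmf.prob (pair_pmf pZ pY)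
      {(z, ys). feasible N K y supp \<epsilon> z (Yobs z ys) \<noteq> {} \<and> Vstar N K Q y supp \<epsilon> z (Yobs z ys) \<ge> VarZ ys}"
  proof (intro measure_pmf.finite_measure_mono_AE AE_pmfI, clarsimp)
    fix z ys assume "ys \<in> set_pmf pY" and "constr_d N K \<epsilon> z (Xtrue N K y ys)"
    moreover have "\<forall>i<N. ys i \<in> set_pmf F"
      using \<open>ys \<in> set_pmf pY\<close> unfolding pY_def by (auto simp: set_Pi_pmf PiE_dflt_def)
    ultimately have "Xtrue N K y ys \<in> feasible N K y supp \<epsilon> z (Yobs z ys)"
      unfolding supp_def using Xtrue_feasible F_supp y_inj by blast
    then show "feasible N K y supp \<epsilon> z (Yobs z ys) \<noteq> {} \<and> VarZ ys \<le> Vstar N K Q y supp \<epsilon> z (Yobs z ys)"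
      using Q_var quad_le_Vstar \<open>ys \<in> set_pmf pY\<close> by fastforce
  qed simp
  finally show "1 - \<beta> \<le> \<dots>" .
qed

end
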